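(* Let $C_\varphi$ be a compact cyclic composition operator on $\mathcal F(\mathbb C^d)$ and let $\mathrm{Cyc}(C_\varphi)$ be its set of cyclic vectors. Then $\mathrm{Cyc}(C_\varphi)\cup\{0\}$ contains no linear subspace of dimension $2$.
   Context: $\mathcal F(\mathbb C^d)$ is the Fock space of entire functions with $\|f\|^2=(2\pi)^{-d}\int_{\mathbb C^d}|f|^2e^{-|z|^2/2}dA<\infty$; $C_\varphi f=f\circ\varphi$; $C_\varphi$ is compact iff $\varphi(z)=Az+b$ with $\|A\|<1$. $x$ is a cyclic vector for $T$ if $\mathrm{span}\{T^nx:n\ge0\}$ is dense. *)

theory Defs
  imports "HOL-Analysis.Analysis"
begin

definition entire_Cd :: "(complex^'d \<Rightarrow> complex) \<Rightarrow> bool" where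
  "entire_Cd f \<longleftrightarrow> (\<forall>z. \<exists>L. (f has_derivative L) (at z) \<and>
      (\<forall>(c::complex) v. L (c *s v) = c * L v))"

definition fock_weight :: "complex^'d \<Rightarrow> real" where
  "fock_weight z = exp (- (norm z)\<^sup>2 / 2)"

definition fock_space :: "(complex^'d \<Rightarrow> complex) set" where
  "fock_space = {f. entire_Cd f \<and>
      integrable lborel (\<lambda>z. (cmod (f z))\<^sup>2 * fock_weight z)}"

definition fock_norm :: "(complex^'d \<Rightarrow> complex) \<Rightarrow> real" where
  "fock_norm f = sqrt ((2 * pi) powi (- int CARD('d)) *
      integral\<^sup>L lborel (\<lambda>z. (cmod (f z))\<^sup>2 * fock_weight z))"

definition holo_map :: "(complex^'d \<Rightarrow> complex^'d) \<Rightarrow> bool" where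
  "holo_map \<phi> \<longleftrightarrow> (\<forall>i. entire_Cd (\<lambda>z. \<phi> z $ i))"

definition comp_op_on_fock :: "(complex^'d \<Rightarrow> complex^'d) \<Rightarrow> bool" where
  "comp_op_on_fock \<phi> \<longleftrightarrow> holo_map \<phi> \<and> (\<forall>f::complex^'d \<Rightarrow> complex\<in>fock_space. f \<circ> \<phi> \<in> fock_space)"

definition compact_comp_op :: "(complex^'d \<Rightarrow> complex^'d) \<Rightarrow> bool" where
  "compact_comp_op \<phi> \<longleftrightarrow> comp_op_on_fock \<phi> \<and>
     (\<forall>s::nat \<Rightarrow> complex^'d \<Rightarrow> complex. (\<forall>n. s n \<in> fock_space \<and> fock_norm (s n) \<le> 1) \<longrightarrow>
        (\<exists>r g. strict_mono r \<and> g \<in> fock_space \<and>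
           (\<lambda>n. fock_norm (\<lambda>z. s (r n) (\<phi> z) - g z)) \<longlonglongrightarrow> 0))"

text \<open>x is a cyclic vector of C_phi: the complex span of {C_phi^n x} is dense in F.
  Note C_phi^n x = x \<circ> phi^n.\<close>
definition cyclic_vec :: "(complex^'d \<Rightarrow> complex^'d) \<Rightarrow> (complex^'d \<Rightarrow> complex) \<Rightarrow> bool" where
  "cyclic_vec \<phi> x \<longleftrightarrow> x \<in> fock_space \<and>
     (\<forall>g::complex^'d \<Rightarrow> complex\<in>fock_space. \<forall>\<epsilon>>0. \<exists>N (c::nat \<Rightarrow> complex).
        fock_norm (\<lambda>z. g z - (\<Sum>k\<le>N. c k * x ((\<phi> ^^ k) z))) < \<epsilon>)"

definition cyclic_op :: "(complex^'d \<Rightarrow> complex^'d) \<Rightarrow> bool" where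
  "cyclic_op \<phi> \<longleftrightarrow> (\<exists>x. cyclic_vec \<phi> x)"

end

theory Submission
  imports Defs "HOL-Probability.Distributions" "HOL-Complex_Analysis.Cauchy_Integral_Formula"
    "HOL-Real_Asymp.Real_Asymp"
begin

text \<open>A compact \<open>C\<^sub>\<phi>\<close> forces \<open>\<phi>\<close> to have a fixed point \<open>z\<^sub>0\<close>: otherwise Brouwer's theorem yields
  points \<open>w\<^sub>n\<close> with \<open>|\<phi> w\<^sub>n| \<rightarrow> \<infinity>\<close>, and the images under \<open>C\<^sub>\<phi>\<close> of the unit reproducing kernels at
  \<open>\<phi> w\<^sub>n\<close> have no convergent subsequence. Point evaluation is bounded,
  \<open>|h z|\<^sup>2 \<le> exp (|z|\<^sup>2/2) \<parallel>h\<parallel>\<^sup>2\<close>, by the sub-mean value property of holomorphic functions with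
  respect to the rotation invariant Gaussian measure. Hence a vector vanishing at \<open>z\<^sub>0\<close> is not
  cyclic, since all its images vanish at \<open>z\<^sub>0\<close> and stay away from the constant \<open>1\<close>; and every
  two-dimensional subspace contains a nonzero vector vanishing at \<open>z\<^sub>0\<close>.\<close>

section \<open>Invariance of Lebesgue measure\<close>

lemma lborel_distr_isometry_permuting_Basis:
  fixes T :: "'a::euclidean_space \<Rightarrow> 'b::euclidean_space" and S :: "'b \<Rightarrow> 'a"
  assumes linT: "linear T" and inv1: "\<And>x. S (T x) = x" and inv2: "\<And>y. T (S y) = y"
    and inner: "\<And>x y. T x \<bullet> T y = x \<bullet> y" and Basis: "T ` Basis = Basis"
  shows "distr lborel borel T = lborel"
proof (rule lborel_eqI[symmetric])
  have mT: "T \<in> borel_measurable borel"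
    using linT by (intro borel_measurable_continuous_onI linear_continuous_on linear_conv_bounded_linear[THEN iffD1])
  have adjoint: "S y \<bullet> b = y \<bullet> T b" for y b
    using inner[of "S y" b] inv2 by simp
  fix l u :: 'b assume le: "\<And>b. b \<in> Basis \<Longrightarrow> l \<bullet> b \<le> u \<bullet> b"
  have "x \<in> box (S l) (S u) \<longleftrightarrow> (\<forall>b\<in>T ` Basis. l \<bullet> b < T x \<bullet> b \<and> T x \<bullet> b < u \<bullet> b)" for x
    by (simp add: mem_box adjoint inner)
  then have preimage: "T -` box l u = box (S l) (S u)"
    by (auto simp: Basis mem_box)
  have "S l \<bullet> b \<le> S u \<bullet> b" if "b \<in> Basis" for b
    using le[of "T b"] that Basis by (auto simp: adjoint)
  then have "emeasure (distr lborel borel T) (box l u) = ennreal (\<Prod>b\<in>Basis. (S u - S l) \<bullet> b)"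
    by (simp add: emeasure_distr mT preimage emeasure_lborel_box)
  also have "(\<Prod>b\<in>Basis. (S u - S l) \<bullet> b) = (\<Prod>b\<in>T ` Basis. (u - l) \<bullet> b)"
    by (subst prod.reindex) (auto intro: inj_on_inverseI[of _ S] simp: inv1 adjoint inner_diff_left)
  finally show "emeasure (distr lborel borel T) (box l u) = (\<Prod>b\<in>Basis. (u - l) \<bullet> b)"
    by (simp add: Basis)
qed simp

lemma lborel_distr_compose:
  fixes f :: "'b::euclidean_space \<Rightarrow> 'c::euclidean_space" and g :: "'a::euclidean_space \<Rightarrow> 'b"
  assumes "distr lborel borel f = lborel" "distr lborel borel g = lborel"
    and "continuous_on UNIV f" "continuous_on UNIV g"
  shows "distr lborel borel (f \<circ> g) = lborel"
proof -
  have "f \<in> borel \<rightarrow>\<^sub>M borel" "g \<in> lborel \<rightarrow>\<^sub>M borel"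
    using assms(3,4) by (auto intro: borel_measurable_continuous_onI)
  then have "distr lborel borel (f \<circ> g) = distr (distr lborel borel g) borel f"
    by (rule distr_distr[symmetric])
  then show ?thesis using assms(1,2) by simp
qed

lemma nn_integral_lborel_translate:
  fixes f :: "'a::euclidean_space \<Rightarrow> ennreal"
  assumes f: "f \<in> borel_measurable borel"
  shows "(\<integral>\<^sup>+x. f (x + c) \<partial>lborel) = (\<integral>\<^sup>+x. f x \<partial>lborel)"
proof -
  have "(\<integral>\<^sup>+x. f x \<partial>lborel) = (\<integral>\<^sup>+x. f x \<partial>(distr lborel borel ((+) c)))"
    by (simp add: lborel_distr_plus)
  also have "\<dots> = (\<integral>\<^sup>+x. f (c + x) \<partial>lborel)"
    by (subst nn_integral_distr) (auto simp: f)
  finally show ?thesis by (simp add: add.commute)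
qed

definition shear_fst :: "real \<Rightarrow> 'a::euclidean_space \<times> 'a \<Rightarrow> 'a \<times> 'a" where
  "shear_fst a p = (fst p + a *\<^sub>R snd p, snd p)"

definition shear_snd :: "real \<Rightarrow> 'a::euclidean_space \<times> 'a \<Rightarrow> 'a \<times> 'a" where
  "shear_snd a p = (fst p, snd p + a *\<^sub>R fst p)"

lemma continuous_on_shear_fst: "continuous_on UNIV (shear_fst a)"
  and continuous_on_shear_snd: "continuous_on UNIV (shear_snd a)"
  unfolding shear_fst_def shear_snd_def by (intro continuous_intros)+

lemma borel_measurable_shear_fst [measurable]: "shear_fst a \<in> borel_measurable borel"
  by (intro borel_measurable_continuous_onI continuous_on_shear_fst)

text \<open>A shear is a translation on each fibre, so Tonelli and translation invariance apply.\<close>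

lemma lborel_distr_shear_fst: "distr lborel borel (shear_fst a :: 'a::euclidean_space \<times> 'a \<Rightarrow> _) = lborel"
proof (rule measure_eqI)
  fix A :: "('a \<times> 'a) set" assume "A \<in> sets (distr lborel borel (shear_fst a))"
  then have [measurable]: "A \<in> sets borel" by simp
  have "emeasure (distr lborel borel (shear_fst a)) A = (\<integral>\<^sup>+p. indicator A (shear_fst a p) \<partial>lborel)"
    using nn_integral_distr[of "shear_fst a" lborel borel "indicator A"] by (simp add: nn_integral_indicator)
  also have "\<dots> = (\<integral>\<^sup>+y. \<integral>\<^sup>+x. indicator A (x + a *\<^sub>R y, y) \<partial>lborel \<partial>lborel)"
    unfolding lborel_prod[symmetric]
    by (subst lborel_pair.nn_integral_snd[symmetric]) (simp_all add: shear_fst_def)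
  also have "\<dots> = (\<integral>\<^sup>+y. \<integral>\<^sup>+x. indicator A (x, y) \<partial>lborel \<partial>lborel)"
    by (intro nn_integral_cong nn_integral_lborel_translate[where f = "\<lambda>x. indicator A (x, _)"]) simp
  also have "\<dots> = emeasure lborel A"
    unfolding lborel_prod[symmetric]
    by (subst lborel_pair.nn_integral_snd) (simp_all add: lborel_prod)
  finally show "emeasure (distr lborel borel (shear_fst a)) A = emeasure lborel A" .
qed simp

lemma lborel_distr_swap: "distr lborel borel (prod.swap :: 'a::euclidean_space \<times> 'a \<Rightarrow> _) = lborel"
  by (rule lborel_distr_isometry_permuting_Basis[where S = prod.swap])
     (auto simp: linear_iff inner_prod_def Basis_prod_def image_Un image_image add.commute)

lemma lborel_distr_shear_snd: "distr lborel borel (shear_snd a :: 'a::euclidean_space \<times> 'a \<Rightarrow> _) = lborel"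
proof -
  have "shear_snd a = prod.swap \<circ> (shear_fst a \<circ> prod.swap)"
    by (auto simp: shear_snd_def shear_fst_def)
  moreover have "distr lborel borel (shear_fst a \<circ> prod.swap :: 'a \<times> 'a \<Rightarrow> _) = lborel"
    by (intro lborel_distr_compose lborel_distr_shear_fst lborel_distr_swap continuous_on_shear_fst
        continuous_on_swap)
  moreover have "continuous_on UNIV (shear_fst a \<circ> prod.swap :: 'a \<times> 'a \<Rightarrow> _)"
    by (intro continuous_on_compose continuous_on_swap continuous_on_subset[OF continuous_on_shear_fst]) simp
  ultimately show ?thesis
    by (metis lborel_distr_compose lborel_distr_swap continuous_on_swap)
qed

definition rotation :: "real \<Rightarrow> 'a::euclidean_space \<times> 'a \<Rightarrow> 'a \<times> 'a" where
  "rotation t p = (cos t *\<^sub>R fst p - sin t *\<^sub>R snd p, sin t *\<^sub>R fst p + cos t *\<^sub>R snd p)"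

lemma continuous_on_rotation: "continuous_on UNIV (rotation t)"
  unfolding rotation_def by (intro continuous_intros)

lemma rotation_eq_shears:
  assumes "cos (t/2) \<noteq> 0"
  shows "rotation t = shear_fst (- tan (t/2)) \<circ> shear_snd (sin t) \<circ> shear_fst (- tan (t/2))"
proof
  fix p :: "'a \<times> 'a"
  obtain x y where p: "p = (x, y)" by fastforce
  define h where "h = t/2"
  have c: "cos h \<noteq> 0" using assms by (simp add: h_def)
  have t: "t = 2 * h" by (simp add: h_def)
  have cos_eq: "1 - sin t * tan h = cos t"
    using c unfolding t sin_double cos_double tan_def
    by (simp add: field_simps power2_eq_square)
  have "sin h * (2 * (cos h)\<^sup>2 + 2 * (sin h)\<^sup>2) = 2 * sin h"
    by (simp flip: distrib_left)
  then have sin_eq: "- tan h - tan h * cos t = - sin t"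
    using c unfolding t sin_double cos_double tan_def
    by (simp add: field_simps power2_eq_square)
  have "(shear_fst (- tan (t/2)) \<circ> shear_snd (sin t) \<circ> shear_fst (- tan (t/2))) p
      = ((1 - sin t * tan h) *\<^sub>R x + (- tan h - tan h * (1 - sin t * tan h)) *\<^sub>R y,
         sin t *\<^sub>R x + (1 - sin t * tan h) *\<^sub>R y)"
    by (simp add: p shear_fst_def shear_snd_def h_def[symmetric] algebra_simps flip: scaleR_add_left)
  also have "\<dots> = rotation t p" by (simp add: cos_eq sin_eq p rotation_def)
  finally show "rotation t p = (shear_fst (- tan (t/2)) \<circ> shear_snd (sin t) \<circ> shear_fst (- tan (t/2))) p"
    by simp
qed

lemma lborel_distr_rotation:
  assumes "cos (t/2) \<noteq> 0"
  shows "distr lborel borel (rotation t :: 'a::euclidean_space \<times> 'a \<Rightarrow> _) = lborel"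
proof -
  have "distr lborel borel (shear_snd (sin t) \<circ> shear_fst (- tan (t/2)) :: 'a \<times> 'a \<Rightarrow> _) = lborel"
    by (rule lborel_distr_compose[OF lborel_distr_shear_snd lborel_distr_shear_fst
          continuous_on_shear_snd continuous_on_shear_fst])
  moreover have "continuous_on UNIV (shear_snd (sin t) \<circ> shear_fst (- tan (t/2)) :: 'a \<times> 'a \<Rightarrow> _)"
    by (intro continuous_on_compose continuous_on_shear_fst continuous_on_subset[OF continuous_on_shear_snd]) simp
  ultimately show ?thesis
    unfolding rotation_eq_shears[OF assms] comp_assoc
    by (intro lborel_distr_compose[OF lborel_distr_shear_fst] continuous_on_shear_fst)
qed

lemma
  fixes T :: "'a::euclidean_space \<Rightarrow> 'a" and f :: "'a \<Rightarrow> 'b::{banach, second_countable_topology}"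
  assumes "distr lborel borel T = lborel" "continuous_on UNIV T" "f \<in> borel_measurable borel"
  shows integral_lborel_distr_invariant: "integral\<^sup>L lborel (\<lambda>x. f (T x)) = integral\<^sup>L lborel f"
    and integrable_lborel_distr_invariant: "integrable lborel (\<lambda>x. f (T x)) \<longleftrightarrow> integrable lborel f"
proof -
  have T: "T \<in> lborel \<rightarrow>\<^sub>M borel" using assms(2) by (simp add: borel_measurable_continuous_onI)
  show "integral\<^sup>L lborel (\<lambda>x. f (T x)) = integral\<^sup>L lborel f"
    using integral_distr[OF T assms(3)] assms(1) by simp
  show "integrable lborel (\<lambda>x. f (T x)) \<longleftrightarrow> integrable lborel f"
    using integrable_distr_eq[OF T assms(3)] assms(1) by simp
qed

lemma
  fixes f :: "'a::euclidean_space \<Rightarrow> 'b::{banach, second_countable_topology}"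
  assumes "f \<in> borel_measurable borel"
  shows integral_lborel_translate: "integral\<^sup>L lborel (\<lambda>x. f (x + c)) = integral\<^sup>L lborel f"
    and integrable_lborel_translate: "integrable lborel (\<lambda>x. f (x + c)) \<longleftrightarrow> integrable lborel f"
  using integral_lborel_distr_invariant[OF lborel_distr_plus _ assms, of c]
    integrable_lborel_distr_invariant[OF lborel_distr_plus _ assms, of c]
  by (simp_all add: add.commute continuous_on_add)

text \<open>Identifying \<open>\<complex>\<^sup>d\<close> with \<open>\<real>\<^sup>d \<times> \<real>\<^sup>d\<close> turns multiplication by \<open>cis t\<close> into a rotation.\<close>

definition re_im :: "complex^'d \<Rightarrow> (real^'d) \<times> (real^'d)" where
  "re_im z = ((\<chi> j. Re (z $ j)), (\<chi> j. Im (z $ j)))"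

definition of_re_im :: "(real^'d) \<times> (real^'d) \<Rightarrow> complex^'d" where
  "of_re_im p = (\<chi> j. Complex (fst p $ j) (snd p $ j))"

lemma re_im_of_re_im [simp]: "re_im (of_re_im p) = p"
  and of_re_im_re_im [simp]: "of_re_im (re_im z) = z"
  by (auto simp: re_im_def of_re_im_def vec_eq_iff prod_eq_iff complex_eq_iff)

lemma linear_re_im: "linear re_im"
  and linear_of_re_im: "linear of_re_im"
  by (auto intro!: linearI simp: re_im_def of_re_im_def vec_eq_iff complex_eq_iff)

lemma continuous_on_re_im: "continuous_on UNIV re_im"
  and continuous_on_of_re_im: "continuous_on UNIV of_re_im"
  using linear_re_im linear_of_re_im linear_conv_bounded_linear linear_continuous_on by blast+

lemma inner_re_im: "re_im x \<bullet> re_im y = x \<bullet> y"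
  by (simp add: re_im_def inner_prod_def inner_vec_def inner_complex_def sum.distrib[symmetric])

lemma inner_of_re_im: "of_re_im p \<bullet> of_re_im q = p \<bullet> q"
  by (metis inner_re_im re_im_of_re_im)

lemma re_im_Basis: "re_im ` (Basis :: (complex^'d) set) = Basis"
proof -
  have "re_im (axis i 1 :: complex^'d) = (axis i 1, 0)" "re_im (axis i \<i> :: complex^'d) = (0, axis i 1)" for i
    by (auto simp: re_im_def vec_eq_iff axis_def)
  then show ?thesis
    unfolding Basis_vec_def Basis_prod_def Basis_complex_def
    by (auto simp: image_iff Basis_real_def)
qed

lemma of_re_im_Basis: "of_re_im ` Basis = (Basis :: (complex^'d) set)"
  by (metis (no_types, lifting) image_comp image_cong comp_apply id_apply image_id of_re_im_re_im re_im_Basis)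

lemma lborel_distr_re_im: "distr lborel borel (re_im :: complex^'d \<Rightarrow> _) = lborel"
  by (rule lborel_distr_isometry_permuting_Basis[where S = of_re_im])
     (auto simp: linear_re_im inner_re_im re_im_Basis)

lemma lborel_distr_of_re_im: "distr lborel borel (of_re_im :: _ \<Rightarrow> complex^'d) = lborel"
  by (rule lborel_distr_isometry_permuting_Basis[where S = re_im])
     (auto simp: linear_of_re_im inner_of_re_im of_re_im_Basis)

lemma continuous_on_smult: "continuous_on UNIV (\<lambda>z::complex^'d. c *s z)"
  unfolding vector_scalar_mult_def by (intro continuous_on_vec_lambda continuous_intros)

lemma lborel_distr_cis_smult:
  assumes "cos (t/2) \<noteq> 0"
  shows "distr lborel borel (\<lambda>z::complex^'d. cis t *s z) = lborel"
proof -
  have "(\<lambda>z::complex^'d. cis t *s z) = of_re_im \<circ> (rotation t \<circ> re_im)"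
    by (auto simp: of_re_im_def rotation_def re_im_def vec_eq_iff complex_eq_iff cis.ctr)
  moreover have "distr lborel borel (rotation t \<circ> (re_im :: complex^'d \<Rightarrow> _)) = lborel"
    by (rule lborel_distr_compose[OF lborel_distr_rotation[OF assms] lborel_distr_re_im
          continuous_on_rotation continuous_on_re_im])
  moreover have "continuous_on UNIV (rotation t \<circ> (re_im :: complex^'d \<Rightarrow> _))"
    by (intro continuous_on_compose continuous_on_re_im continuous_on_subset[OF continuous_on_rotation]) simp
  ultimately show ?thesis
    by (metis lborel_distr_compose lborel_distr_of_re_im continuous_on_of_re_im)
qed

text \<open>A general unit \<open>u\<close> is the square of \<open>cis (Arg u / 2)\<close>, whose half angle lies in \<open>]-pi/2, pi/2[\<close>.\<close>

lemma lborel_distr_unit_smult: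
  assumes u: "cmod u = 1"
  shows "distr lborel borel (\<lambda>z::complex^'d. u *s z) = lborel"
proof -
  define h where "h = Arg u / 2"
  have "u \<noteq> 0" using u by auto
  then have "cis (Arg u) = u" using u by (simp add: cis_Arg sgn_div_norm)
  then have u_eq: "u = cis h * cis h" by (simp add: h_def cis_mult)
  have "-(pi/2) < h/2" "h/2 < pi/2" using Arg_bounded[of u] pi_gt_zero unfolding h_def by linarith+
  then have "cos (h/2) \<noteq> 0" by (metis cos_gt_zero_pi less_irrefl)
  then have "distr lborel borel (\<lambda>z::complex^'d. cis h *s z) = lborel"
    by (intro lborel_distr_cis_smult) simp
  moreover have "(\<lambda>z::complex^'d. u *s z) = (\<lambda>z. cis h *s z) \<circ> (\<lambda>z. cis h *s z)"
    by (auto simp: u_eq vector_smult_assoc)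
  ultimately show ?thesis
    by (metis lborel_distr_compose continuous_on_smult)
qed

lemma fock_weight_pos: "fock_weight z > 0"
  by (simp add: fock_weight_def)

lemma continuous_on_fock_weight: "continuous_on UNIV fock_weight"
  unfolding fock_weight_def by (intro continuous_intros) auto

lemma borel_measurable_fock_weight [measurable]: "fock_weight \<in> borel_measurable borel"
  by (rule borel_measurable_continuous_onI[OF continuous_on_fock_weight])

lemma fock_weight_unit_smult:
  assumes "cmod u = 1"
  shows "fock_weight (u *s z) = fock_weight z"
proof -
  have "(u *s z) \<bullet> (u *s z) = z \<bullet> z"
    unfolding inner_vec_def by (simp add: power2_norm_eq_inner[symmetric] norm_mult assms)
  then show ?thesis by (simp add: fock_weight_def power2_norm_eq_inner)
qed

lemma nn_integral_fock_weight:
  "(\<integral>\<^sup>+z. ennreal (fock_weight (z::complex^'d)) \<partial>lborel) = ennreal ((2 * pi) ^ CARD('d))"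
proof -
  have "fock_weight z = (\<Prod>b\<in>Basis. exp (- (z \<bullet> b)\<^sup>2 / 2))" for z :: "complex^'d"
  proof -
    have "- (norm z)\<^sup>2 / 2 = (\<Sum>b\<in>Basis. - (z \<bullet> b)\<^sup>2 / 2)"
      unfolding power2_norm_eq_inner
      by (subst euclidean_inner) (simp add: power2_eq_square sum_divide_distrib[symmetric] sum_negf)
    then show ?thesis by (simp add: fock_weight_def exp_sum)
  qed
  then have "(\<integral>\<^sup>+z. ennreal (fock_weight (z::complex^'d)) \<partial>lborel)
     = (\<integral>\<^sup>+z. (\<Prod>b\<in>Basis. ennreal (exp (- (z \<bullet> b)\<^sup>2 / 2))) \<partial>(lborel :: (complex^'d) measure))"
    by (simp add: prod_ennreal)
  also have "\<dots> = (\<Prod>b\<in>(Basis :: (complex^'d) set). (\<integral>\<^sup>+x. ennreal (exp (- x\<^sup>2 / 2)) \<partial>lborel))"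
    by (rule nn_integral_lborel_prod) auto
  also have "(\<integral>\<^sup>+x. ennreal (exp (- x\<^sup>2 / 2)) \<partial>lborel) = ennreal (sqrt (2 * pi))"
  proof -
    have "(\<integral>\<^sup>+x. ennreal (exp (- x\<^sup>2 / 2)) \<partial>lborel)
        = (\<integral>\<^sup>+x. ennreal (sqrt (2 * pi) * normal_density 0 1 x) \<partial>lborel)"
      by (simp add: normal_density_def)
    also have "\<dots> = ennreal (sqrt (2 * pi))"
      by (subst nn_integral_eq_integral) auto
    finally show ?thesis .
  qed
  also have "(\<Prod>b\<in>(Basis :: (complex^'d) set). ennreal (sqrt (2 * pi))) = ennreal (sqrt (2 * pi) ^ DIM(complex^'d))"
    by (simp add: ennreal_power)
  also have "sqrt (2 * pi) ^ DIM(complex^'d) = (sqrt (2 * pi) ^ 2) ^ CARD('d)"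
    by (simp only: DIM_cart DIM_complex mult.commute[of "CARD('d)" 2] power_mult)
  finally show ?thesis
    by simp
qed

lemma integrable_fock_weight: "integrable lborel (fock_weight :: complex^'d \<Rightarrow> real)"
  by (rule integrableI_nonneg) (auto simp: nn_integral_fock_weight intro!: AE_I2 less_imp_le[OF fock_weight_pos])

lemma integral_fock_weight: "integral\<^sup>L lborel (fock_weight :: complex^'d \<Rightarrow> real) = (2 * pi) ^ CARD('d)"
  by (subst integral_eq_nn_integral) (auto simp: nn_integral_fock_weight intro!: AE_I2 less_imp_le[OF fock_weight_pos])

section \<open>Gaussian mean value property\<close>

lemma holomorphic_circle_mean:
  assumes g: "g holomorphic_on UNIV"
  shows "(LBINT t. indicator {0..1::real} t *\<^sub>R g (cis (2 * pi * t))) = g 0"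
proof -
  have "g holomorphic_on cball 0 1" using g by (rule holomorphic_on_subset) auto
  from Cauchy_integral_circlepath_simple[OF this, of 0]
  have cauchy: "((\<lambda>x. g (circlepath 0 1 x) / circlepath 0 1 x * vector_derivative (circlepath 0 1) (at x within {0..1}))
        has_integral 2 * pi * \<i> * g 0) {0..1}"
    by (simp add: has_contour_integral_def)
  have "2 * pi * \<i> * g (cis (2 * pi * x))
      = g (circlepath 0 1 x) / circlepath 0 1 x * vector_derivative (circlepath 0 1) (at x within {0..1})"
    if "x \<in> {0..1}" for x
  proof -
    have "circlepath 0 1 x = cis (2 * pi * x)"
      by (simp add: circlepath cis_conv_exp mult_ac)
    moreover have "vector_derivative (circlepath 0 1) (at x within {0..1}) = 2 * pi * \<i> * cis (2 * pi * x)"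
      using that by (simp add: vector_derivative_circlepath01 cis_conv_exp mult_ac)
    ultimately show ?thesis
      by (simp add: cis_neq_zero)
  qed
  then have "((\<lambda>t. 2 * pi * \<i> * g (cis (2 * pi * t))) has_integral 2 * pi * \<i> * g 0) {0..1}"
    by (intro has_integral_spike_finite[OF finite.emptyI _ cauchy]) simp
  from has_integral_mult_right[OF this, of "inverse (2 * pi * \<i>)"]
  have mean: "((\<lambda>t. g (cis (2 * pi * t))) has_integral g 0) {0..1}"
    by (simp add: field_simps)
  have "continuous_on {0..1} (\<lambda>t::real. g (cis (2 * pi * t)))"
    unfolding cis_conv_exp
    by (intro continuous_on_compose2[OF holomorphic_on_imp_continuous_on[OF g]] continuous_intros) auto
  then have "set_integrable lborel {0..1::real} (\<lambda>t. g (cis (2 * pi * t)))"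
    unfolding set_integrable_def by (rule borel_integrable_compact[OF compact_Icc])
  from set_borel_integral_eq_integral(2)[OF this] show ?thesis
    by (simp add: set_lebesgue_integral_def integral_unique[OF mean])
qed

text \<open>Averaging over the rotations \<open>z \<mapsto> cis (2 pi t) z\<close>, which preserve both Lebesgue measure
  and the weight, and then using Fubini and the circle mean on each complex line through \<open>0\<close>.\<close>

lemma gaussian_mean_value:
  fixes G :: "complex^'d \<Rightarrow> complex"
  assumes cont: "continuous_on UNIV G"
    and hol: "\<And>z. (\<lambda>t. G (t *s z)) holomorphic_on UNIV"
    and int: "integrable lborel (\<lambda>z. G z * fock_weight z)"
  shows "(LINT z|lborel. G z * fock_weight z) = G 0 * (2 * pi) ^ CARD('d)"
proof -
  define H where "H z = G z * fock_weight z" for z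
  define R where "R t z = cis (2 * pi * t) *s z" for t and z :: "complex^'d"
  have "continuous_on UNIV H"
    unfolding H_def by (intro continuous_intros cont continuous_on_fock_weight)
  then have cont_H: "continuous_on UNIV (\<lambda>p. H (R (fst p) (snd p)))"
    and meas_H: "H \<in> borel_measurable borel"
    unfolding R_def vector_scalar_mult_def
    by (auto intro!: continuous_on_compose2[of UNIV H] continuous_on_vec_lambda continuous_intros
        borel_measurable_continuous_onI)
  then have meas_norm_H: "(\<lambda>z. norm (H z)) \<in> borel_measurable borel" by measurable
  have int_H: "integrable lborel H" using int by (simp add: H_def[abs_def])
  have unit: "cmod (cis (2 * pi * t)) = 1" for t by simp
  note lborel_R = lborel_distr_unit_smult[OF unit] continuous_on_smult
  have rot_integral: "(LINT z|lborel. H (R t z)) = (LINT z|lborel. H z)"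
    and rot_integrable: "integrable lborel (\<lambda>z. H (R t z))"
    and rot_norm: "(LINT z|lborel. norm (H (R t z))) = (LINT z|lborel. norm (H z))" for t
    using integral_lborel_distr_invariant[OF lborel_R meas_H] integrable_lborel_distr_invariant[OF lborel_R meas_H]
      integral_lborel_distr_invariant[OF lborel_R meas_norm_H] int_H
    by (simp_all add: R_def)
  define F where "F t z = indicator {0..1::real} t *\<^sub>R H (R t z)" for t z
  have "(\<lambda>p::real \<times> (complex^'d). indicator {0..1::real} (fst p) :: real) \<in> borel_measurable borel"
    by (rule measurable_compose[OF borel_measurable_continuous_onI[OF continuous_on_fst[OF continuous_on_id]]])
      simp
  then have "(\<lambda>p. F (fst p) (snd p)) \<in> borel_measurable (lborel \<Otimes>\<^sub>M lborel)"
    unfolding F_def lborel_prod measurable_lborel2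
    by (intro borel_measurable_scaleR borel_measurable_continuous_onI[OF cont_H])
  then have int_F: "integrable (lborel \<Otimes>\<^sub>M lborel) (\<lambda>(t, z). F t z)"
    unfolding case_prod_beta'
  proof (rule lborel_pair.Fubini_integrable)
    have "(\<lambda>t. LBINT z. norm (F t z)) = (\<lambda>t. indicator {0..1::real} t *\<^sub>R (LBINT z. norm (H z)))"
      by (auto simp: F_def rot_norm indicator_def)
    then show "integrable lborel (\<lambda>t. LBINT z. norm (F (fst (t, z)) (snd (t, z))))"
      by simp
    show "AE t in lborel. integrable lborel (\<lambda>z. F (fst (t, z)) (snd (t, z)))"
      by (simp add: F_def rot_integrable)
  qed
  have "(LBINT t. F t z) = G 0 * fock_weight z" for z :: "complex^'d"
  proof -
    have "(LBINT t. F t z) = (LBINT t. indicator {0..1::real} t *\<^sub>R G (cis (2 * pi * t) *s z)) * fock_weight z"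
      by (simp add: F_def H_def R_def fock_weight_unit_smult[OF unit] flip: integral_mult_left_zero)
    then show ?thesis
      using holomorphic_circle_mean[OF hol] by (simp add: vector_smult_lzero)
  qed
  then have "(LINT z|lborel. G 0 * fock_weight (z::complex^'d)) = (LBINT z. LBINT t. F t z)"
    by simp
  also have "\<dots> = (LBINT t. LBINT z. F t z)"
    by (rule lborel_pair.Fubini_integral[OF int_F])
  also have "\<dots> = (LINT z|lborel. H z)"
    by (simp add: F_def rot_integral)
  finally show ?thesis
    by (simp add: H_def integral_fock_weight)
qed

lemma gaussian_sub_mean_value:
  fixes G :: "complex^'d \<Rightarrow> complex"
  assumes cont: "continuous_on UNIV G"
    and hol: "\<And>z. (\<lambda>t. G (t *s z)) holomorphic_on UNIV"
    and int: "integrable lborel (\<lambda>z. (cmod (G z))\<^sup>2 * fock_weight z)"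
  shows "(cmod (G 0))\<^sup>2 * (2 * pi) ^ CARD('d) \<le> (LINT z|lborel. (cmod (G z))\<^sup>2 * fock_weight z)"
proof -
  define c where "c = G 0"
  have int_w: "integrable lborel (fock_weight :: complex^'d \<Rightarrow> real)"
    by (rule integrable_fock_weight)
  have int_Gw: "integrable lborel (\<lambda>z. G z * fock_weight z)"
  proof (rule Bochner_Integration.integrable_bound)
    show "integrable lborel (\<lambda>z. (cmod (G z))\<^sup>2 * fock_weight z + fock_weight z)"
      using int int_w by simp
    show "(\<lambda>z. G z * fock_weight z) \<in> borel_measurable lborel"
      unfolding measurable_lborel2
      by (intro borel_measurable_continuous_onI continuous_intros cont continuous_on_fock_weight)
    have "cmod (G z) * fock_weight z \<le> ((cmod (G z))\<^sup>2 + 1) * fock_weight z" for z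
      using zero_le_power2[of "cmod (G z) - 1/2"] fock_weight_pos[of z]
      by (intro mult_right_mono) (simp_all add: power2_eq_square algebra_simps)
    then show "AE z in lborel. norm (G z * fock_weight z) \<le> norm ((cmod (G z))\<^sup>2 * fock_weight z + fock_weight z)"
      by (intro AE_I2) (auto simp: norm_mult abs_of_pos fock_weight_pos distrib_right intro: order_trans[OF _ abs_ge_self])
  qed
  have expand: "(cmod (G z - c))\<^sup>2 * fock_weight z
      = (cmod (G z))\<^sup>2 * fock_weight z - 2 * Re (cnj c * (G z * fock_weight z)) + (cmod c)\<^sup>2 * fock_weight z" for z
    unfolding cmod_power2 by (simp add: power2_eq_square algebra_simps)
  have "0 \<le> (LINT z|lborel. (cmod (G z - c))\<^sup>2 * fock_weight z)"
    by (intro integral_nonneg_AE AE_I2 mult_nonneg_nonneg zero_le_power2 less_imp_le[OF fock_weight_pos])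
  also have "\<dots> = (LINT z|lborel. (cmod (G z))\<^sup>2 * fock_weight z)
      - 2 * Re (cnj c * (LINT z|lborel. G z * fock_weight z)) + (cmod c)\<^sup>2 * (2 * pi) ^ CARD('d)"
  proof -
    have int_Re: "integrable lborel (\<lambda>z. 2 * Re (cnj c * (G z * fock_weight z)))"
      using int_Gw by (intro integrable_mult_right integrable_Re)
    have "(LINT z|lborel. 2 * Re (cnj c * (G z * fock_weight z))) = 2 * Re (cnj c * (LINT z|lborel. G z * fock_weight z))"
      by (simp only: integral_mult_right_zero integral_Re[OF integrable_mult_right[OF int_Gw]])
    then show ?thesis
      unfolding expand
      using int int_w int_Re by (simp add: integral_fock_weight)
  qed
  also have "\<dots> = (LINT z|lborel. (cmod (G z))\<^sup>2 * fock_weight z) - (cmod c)\<^sup>2 * (2 * pi) ^ CARD('d)"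
    unfolding gaussian_mean_value[OF cont hol int_Gw] c_def[symmetric] cmod_power2
    by (simp add: power2_eq_square algebra_simps)
  finally show ?thesis
    by (simp add: c_def)
qed

lemma entire_Cd_continuous: "entire_Cd f \<Longrightarrow> continuous_on UNIV f"
  unfolding entire_Cd_def
  by (metis continuous_at_imp_continuous_on has_derivative_continuous)

lemma entire_Cd_holomorphic_on_line:
  assumes "entire_Cd f"
  shows "(\<lambda>t. f (t *s z + v)) holomorphic_on UNIV"
  unfolding holomorphic_on_def field_differentiable_def has_field_derivative_def
proof
  fix t0 :: complex
  obtain L where L: "(f has_derivative L) (at (t0 *s z + v))" and hom: "\<And>(c::complex) u. L (c *s u) = c * L u"
    using assms unfolding entire_Cd_def by blast
  have "linear (\<lambda>s::complex. s *s z)"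
    by (rule linearI) (simp_all add: vec_eq_iff vector_scaleR_component vector_smult_component algebra_simps)
  then have "bounded_linear (\<lambda>s::complex. s *s z)"
    using linear_conv_bounded_linear by blast
  then have "((\<lambda>t. t *s z + v) has_derivative (\<lambda>s. s *s z)) (at t0)"
    using has_derivative_add_const bounded_linear_imp_has_derivative by blast
  from has_derivative_compose[OF this L]
  have "((\<lambda>t. f (t *s z + v)) has_derivative (*) (L z)) (at t0)"
    by (simp add: comp_def hom mult.commute[of _ "L z"])
  then show "\<exists>f'. ((\<lambda>t. f (t *s z + v)) has_derivative (*) f') (at t0 within UNIV)"
    by blast
qed

lemma entire_Cd_const: "entire_Cd (\<lambda>z. c)"
  unfolding entire_Cd_def by (auto intro!: exI[of _ "\<lambda>_. 0"])

lemma entire_Cd_lincomb: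
  assumes "entire_Cd f" "entire_Cd g"
  shows "entire_Cd (\<lambda>z. a * f z + b * g z)"
  unfolding entire_Cd_def
proof
  fix z
  obtain L1 where "(f has_derivative L1) (at z)" "\<And>(c::complex) v. L1 (c *s v) = c * L1 v"
    using assms(1) unfolding entire_Cd_def by blast
  moreover obtain L2 where "(g has_derivative L2) (at z)" "\<And>(c::complex) v. L2 (c *s v) = c * L2 v"
    using assms(2) unfolding entire_Cd_def by blast
  ultimately have "((\<lambda>z. a * f z + b * g z) has_derivative (\<lambda>h. a * L1 h + b * L2 h)) (at z)"
    and "\<forall>(c::complex) v. a * L1 (c *s v) + b * L2 (c *s v) = c * (a * L1 v + b * L2 v)"
    by (auto intro!: has_derivative_add has_derivative_mult_right simp: algebra_simps)
  then show "\<exists>L. ((\<lambda>z. a * f z + b * g z) has_derivative L) (at z) \<and> (\<forall>(c::complex) v. L (c *s v) = c * L v)"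
    by blast
qed

lemma entire_Cd_exp:
  assumes "entire_Cd f"
  shows "entire_Cd (\<lambda>z. exp (f z))"
  unfolding entire_Cd_def
proof
  fix z
  obtain L where L: "(f has_derivative L) (at z)" and hom: "\<And>(c::complex) v. L (c *s v) = c * L v"
    using assms unfolding entire_Cd_def by blast
  have "(exp has_derivative (*) (exp (f z))) (at (f z))"
    using DERIV_exp[of "f z"] by (simp add: has_field_derivative_def)
  from has_derivative_compose[OF L this]
  have "((\<lambda>z. exp (f z)) has_derivative (\<lambda>h. exp (f z) * L h)) (at z)"
    by (simp add: comp_def)
  then show "\<exists>L. ((\<lambda>z. exp (f z)) has_derivative L) (at z) \<and> (\<forall>(c::complex) v. L (c *s v) = c * L v)"
    using hom by (metis mult.left_commute)
qed

definition hinner :: "complex^'d \<Rightarrow> complex^'d \<Rightarrow> complex" where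
  "hinner z v = (\<Sum>j\<in>UNIV. z $ j * cnj (v $ j))"

lemma Re_hinner: "Re (hinner z v) = z \<bullet> v"
  by (simp add: hinner_def inner_vec_def inner_complex_def)

lemma hinner_smult: "hinner (t *s z) v = t * hinner z v"
  by (simp add: hinner_def sum_distrib_left mult_ac)

lemma hinner_zero [simp]: "hinner 0 v = 0"
  by (simp add: hinner_def)

lemma continuous_on_hinner: "continuous_on UNIV (\<lambda>z. hinner z v)"
  unfolding hinner_def by (intro continuous_intros)

lemma entire_Cd_hinner: "entire_Cd (\<lambda>z. hinner z v)"
proof -
  have "linear (\<lambda>z. hinner z v)"
    by (rule linearI)
       (simp_all add: hinner_def sum.distrib ring_distribs scaleR_sum_right)
  then have "bounded_linear (\<lambda>z. hinner z v)"
    using linear_conv_bounded_linear by blast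
  then show ?thesis
    unfolding entire_Cd_def using bounded_linear_imp_has_derivative hinner_smult by blast
qed

lemma fock_space_lincomb:
  fixes f g :: "complex^'d \<Rightarrow> complex"
  assumes f: "f \<in> fock_space" and g: "g \<in> fock_space"
  shows "(\<lambda>z. a * f z + b * g z) \<in> fock_space"
proof -
  have entire: "entire_Cd (\<lambda>z. a * f z + b * g z)"
    using f g by (intro entire_Cd_lincomb) (auto simp: fock_space_def)
  have bound: "(cmod (a * f z + b * g z))\<^sup>2 \<le> 2 * (cmod a)\<^sup>2 * (cmod (f z))\<^sup>2 + 2 * (cmod b)\<^sup>2 * (cmod (g z))\<^sup>2" for z
  proof -
    have "(cmod (a * f z + b * g z))\<^sup>2 \<le> (cmod (a * f z) + cmod (b * g z))\<^sup>2"
      by (intro power_mono norm_triangle_ineq) simp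
    also have "\<dots> \<le> 2 * (cmod (a * f z))\<^sup>2 + 2 * (cmod (b * g z))\<^sup>2"
      using zero_le_power2[of "cmod (a * f z) - cmod (b * g z)"] by (simp add: power2_eq_square algebra_simps)
    finally show ?thesis by (simp add: norm_mult power_mult_distrib)
  qed
  have "AE z in lborel. norm ((cmod (a * f z + b * g z))\<^sup>2 * fock_weight z)
      \<le> norm (2 * (cmod a)\<^sup>2 * ((cmod (f z))\<^sup>2 * fock_weight z) + 2 * (cmod b)\<^sup>2 * ((cmod (g z))\<^sup>2 * fock_weight z))"
  proof (intro AE_I2)
    fix z
    have "(cmod (a * f z + b * g z))\<^sup>2 * fock_weight z
        \<le> (2 * (cmod a)\<^sup>2 * (cmod (f z))\<^sup>2 + 2 * (cmod b)\<^sup>2 * (cmod (g z))\<^sup>2) * fock_weight z"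
      using bound[of z] fock_weight_pos[of z] by (intro mult_right_mono) auto
    then show "norm ((cmod (a * f z + b * g z))\<^sup>2 * fock_weight z)
      \<le> norm (2 * (cmod a)\<^sup>2 * ((cmod (f z))\<^sup>2 * fock_weight z) + 2 * (cmod b)\<^sup>2 * ((cmod (g z))\<^sup>2 * fock_weight z))"
      using fock_weight_pos[of z] by (simp add: algebra_simps)
  qed
  moreover have "(\<lambda>z. (cmod (a * f z + b * g z))\<^sup>2 * fock_weight z) \<in> borel_measurable lborel"
    unfolding measurable_lborel2
    by (intro borel_measurable_continuous_onI continuous_intros entire_Cd_continuous[OF entire]
        continuous_on_fock_weight)
  moreover have "integrable lborel
      (\<lambda>z. 2 * (cmod a)\<^sup>2 * ((cmod (f z))\<^sup>2 * fock_weight z) + 2 * (cmod b)\<^sup>2 * ((cmod (g z))\<^sup>2 * fock_weight z))"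
    using f g by (simp add: fock_space_def)
  ultimately have "integrable lborel (\<lambda>z. (cmod (a * f z + b * g z))\<^sup>2 * fock_weight z)"
    using Bochner_Integration.integrable_bound by blast
  then show ?thesis
    using entire by (simp add: fock_space_def)
qed

lemma fock_space_diff: "f \<in> fock_space \<Longrightarrow> g \<in> fock_space \<Longrightarrow> (\<lambda>z. f z - g z) \<in> fock_space"
  using fock_space_lincomb[of f g 1 "- 1"] by simp

lemma fock_space_const: "(\<lambda>z::complex^'d. c) \<in> fock_space"
  using integrable_mult_right[OF integrable_fock_weight, of "(cmod c)\<^sup>2"]
  by (simp add: fock_space_def entire_Cd_const)

lemma fock_space_sum:
  fixes f :: "nat \<Rightarrow> complex^'d \<Rightarrow> complex"
  assumes "\<And>k. f k \<in> fock_space"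
  shows "(\<lambda>z. \<Sum>k\<le>N. c k * f k z) \<in> fock_space"
proof (induction N)
  case 0
  then show ?case using fock_space_lincomb[OF assms[of 0] assms[of 0], of "c 0" 0] by simp
next
  case (Suc N)
  then show ?case using fock_space_lincomb[OF Suc assms[of "Suc N"], of 1 "c (Suc N)"] by simp
qed

lemma fock_space_funpow:
  assumes "comp_op_on_fock \<phi>" "x \<in> fock_space"
  shows "(\<lambda>z. x ((\<phi> ^^ k) z)) \<in> fock_space"
  using assms(2)
proof (induction k arbitrary: x)
  case (Suc k)
  then have "(\<lambda>z. x ((\<phi> ^^ k) z)) \<circ> \<phi> \<in> fock_space"
    using assms(1) by (simp add: comp_op_on_fock_def)
  then show ?case by (simp add: funpow_Suc_right comp_def del: funpow.simps)
qed simp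

lemma fock_norm_nonneg: "fock_norm f \<ge> 0"
  and integral_fock_norm: "(LINT z|lborel. (cmod (f z))\<^sup>2 * fock_weight z) = (2 * pi) ^ CARD('d) * (fock_norm f)\<^sup>2"
  for f :: "complex^'d \<Rightarrow> complex"
proof -
  have "0 \<le> (LINT z|lborel. (cmod (f z))\<^sup>2 * fock_weight z)"
    by (intro integral_nonneg_AE AE_I2 mult_nonneg_nonneg zero_le_power2 less_imp_le[OF fock_weight_pos])
  then show "fock_norm f \<ge> 0" "(LINT z|lborel. (cmod (f z))\<^sup>2 * fock_weight z) = (2 * pi) ^ CARD('d) * (fock_norm f)\<^sup>2"
    by (simp_all add: fock_norm_def power_int_minus field_simps)
qed

text \<open>The translate \<open>h (z + v) exp (-\<langle>z, v\<rangle>/2)\<close> has the same Fock norm up to the factor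
  \<open>exp (|v|\<^sup>2/4)\<close> and takes the value \<open>h v\<close> at \<open>0\<close>; the sub-mean value inequality does the rest.\<close>

lemma fock_point_evaluation:
  fixes h :: "complex^'d \<Rightarrow> complex"
  assumes h: "h \<in> fock_space"
  shows "(cmod (h v))\<^sup>2 \<le> exp ((norm v)\<^sup>2 / 2) * (fock_norm h)\<^sup>2"
proof -
  have entire: "entire_Cd h" and int: "integrable lborel (\<lambda>z. (cmod (h z))\<^sup>2 * fock_weight z)"
    using h by (auto simp: fock_space_def)
  define G where "G z = h (z + v) * exp (- hinner z v / 2)" for z
  have cont: "continuous_on UNIV G"
    unfolding G_def
    by (intro continuous_intros continuous_on_compose2[OF entire_Cd_continuous[OF entire]]
        continuous_on_compose2[OF continuous_on_hinner]) auto
  have hol: "(\<lambda>t. G (t *s z)) holomorphic_on UNIV" for z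
    unfolding G_def hinner_smult
    by (intro holomorphic_intros entire_Cd_holomorphic_on_line[OF entire]) auto
  have translate: "(cmod (G z))\<^sup>2 * fock_weight z = exp ((norm v)\<^sup>2 / 2) * ((cmod (h (z + v)))\<^sup>2 * fock_weight (z + v))" for z
  proof -
    have "(cmod (exp (- hinner z v / 2)))\<^sup>2 = exp (- (z \<bullet> v))"
      by (simp add: norm_exp_eq_Re Re_hinner power2_eq_square flip: exp_add)
    moreover have "(norm (z + v))\<^sup>2 = (norm z)\<^sup>2 + 2 * (z \<bullet> v) + (norm v)\<^sup>2"
      by (simp add: power2_norm_eq_inner inner_add_left inner_add_right inner_commute)
    ultimately show ?thesis
      by (simp add: G_def norm_mult power_mult_distrib fock_weight_def field_simps flip: exp_add)
  qed
  have meas: "(\<lambda>z. (cmod (h z))\<^sup>2 * fock_weight z) \<in> borel_measurable borel"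
    by (intro borel_measurable_continuous_onI continuous_intros entire_Cd_continuous[OF entire]
        continuous_on_fock_weight)
  have "(cmod (h v))\<^sup>2 * (2 * pi) ^ CARD('d) = (cmod (G 0))\<^sup>2 * (2 * pi) ^ CARD('d)"
    by (simp add: G_def)
  also have "\<dots> \<le> (LINT z|lborel. (cmod (G z))\<^sup>2 * fock_weight z)"
    using integrable_lborel_translate[OF meas, of v] int
    by (intro gaussian_sub_mean_value[OF cont hol]) (simp add: translate)
  also have "\<dots> = exp ((norm v)\<^sup>2 / 2) * (fock_norm h)\<^sup>2 * (2 * pi) ^ CARD('d)"
    using integral_lborel_translate[OF meas, of v] by (simp add: translate integral_fock_norm)
  finally show ?thesis
    by simp
qed

lemma fock_norm_tendsto_zero_imp_pointwise:
  assumes "\<And>n. h n \<in> fock_space" and "(\<lambda>n. fock_norm (h n)) \<longlonglongrightarrow> 0"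
  shows "(\<lambda>n. h n z) \<longlonglongrightarrow> 0"
proof (rule Lim_null_comparison)
  have "norm (h n z) \<le> exp ((norm z)\<^sup>2 / 4) * fock_norm (h n)" for n
  proof (rule power2_le_imp_le)
    have "(exp ((norm z)\<^sup>2 / 4))\<^sup>2 = exp ((norm z)\<^sup>2 / 2)"
      by (simp add: power2_eq_square flip: exp_add)
    then show "(norm (h n z))\<^sup>2 \<le> (exp ((norm z)\<^sup>2 / 4) * fock_norm (h n))\<^sup>2"
      using fock_point_evaluation[OF assms(1)] by (simp add: power_mult_distrib)
    show "0 \<le> exp ((norm z)\<^sup>2 / 4) * fock_norm (h n)"
      by (intro mult_nonneg_nonneg fock_norm_nonneg) simp
  qed
  then show "\<forall>\<^sub>F n in sequentially. norm (h n z) \<le> exp ((norm z)\<^sup>2 / 4) * fock_norm (h n)"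
    by simp
  show "(\<lambda>n. exp ((norm z)\<^sup>2 / 4) * fock_norm (h n)) \<longlonglongrightarrow> 0"
    using tendsto_mult_right_zero[OF assms(2)] by simp
qed

section \<open>Normalized reproducing kernels\<close>

definition fock_kernel :: "complex^'d \<Rightarrow> complex^'d \<Rightarrow> complex" where
  "fock_kernel v z = exp (hinner z v / 2 - of_real ((norm v)\<^sup>2 / 4))"

lemma norm_fock_kernel: "cmod (fock_kernel v z) = exp (z \<bullet> v / 2 - (norm v)\<^sup>2 / 4)"
  by (simp add: fock_kernel_def norm_exp_eq_Re Re_hinner)

lemma fock_kernel_weight: "(cmod (fock_kernel v z))\<^sup>2 * fock_weight z = fock_weight (z - v)"
proof -
  have "(norm (z - v))\<^sup>2 = (norm z)\<^sup>2 - 2 * (z \<bullet> v) + (norm v)\<^sup>2"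
    by (simp add: power2_norm_eq_inner inner_diff_left inner_diff_right inner_commute)
  then show ?thesis
    by (simp add: norm_fock_kernel fock_weight_def power2_eq_square field_simps flip: exp_add)
qed

lemma
  fixes v :: "complex^'d"
  shows fock_kernel_in_fock_space: "fock_kernel v \<in> fock_space"
    and fock_norm_fock_kernel: "fock_norm (fock_kernel v) = 1"
proof -
  have "entire_Cd (\<lambda>z. exp ((1/2) * hinner z v + (- of_real ((norm v)\<^sup>2 / 4)) * 1))"
    by (intro entire_Cd_exp entire_Cd_lincomb entire_Cd_hinner entire_Cd_const)
  then have "entire_Cd (fock_kernel v)"
    by (simp add: fock_kernel_def[abs_def] field_simps)
  moreover note translate = integral_lborel_translate[OF borel_measurable_fock_weight, of "- v"]
    integrable_lborel_translate[OF borel_measurable_fock_weight, of "- v"]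
  ultimately show "fock_kernel v \<in> fock_space"
    by (simp add: fock_space_def fock_kernel_weight integrable_fock_weight)
  have "(2 * pi) ^ CARD('d) * (fock_norm (fock_kernel v))\<^sup>2
      = (LINT z|lborel. (cmod (fock_kernel v z))\<^sup>2 * fock_weight z)"
    by (rule integral_fock_norm[symmetric])
  also have "\<dots> = (2 * pi) ^ CARD('d)"
    using translate by (simp add: fock_kernel_weight integral_fock_weight)
  finally have "(2 * pi) ^ CARD('d) * (fock_norm (fock_kernel v))\<^sup>2 = (2 * pi) ^ CARD('d)" .
  then show "fock_norm (fock_kernel v) = 1"
    using fock_norm_nonneg[of "fock_kernel v"] by (simp add: power2_eq_1_iff)
qed

lemma fock_kernel_tendsto_zero:
  assumes v: "filterlim (\<lambda>n. norm (v n)) at_top sequentially"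
  shows "(\<lambda>n. fock_kernel (v n) u) \<longlonglongrightarrow> 0"
proof (rule Lim_null_comparison)
  have "((\<lambda>x::real. exp (norm u * x / 2 - x\<^sup>2 / 4)) \<longlongrightarrow> 0) at_top"
    by real_asymp
  from filterlim_compose[OF this v]
  show "(\<lambda>n. exp (norm u * norm (v n) / 2 - (norm (v n))\<^sup>2 / 4)) \<longlonglongrightarrow> 0"
    by (simp add: comp_def)
  show "\<forall>\<^sub>F n in sequentially. norm (fock_kernel (v n) u) \<le> exp (norm u * norm (v n) / 2 - (norm (v n))\<^sup>2 / 4)"
    using norm_cauchy_schwarz[of u] by (simp add: norm_fock_kernel divide_right_mono)
qed

lemma one_le_fock_norm_if_kernel_value:
  assumes "h \<in> fock_space" "norm w \<le> norm v" "h w = fock_kernel v v"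
  shows "1 \<le> fock_norm h"
proof -
  have "exp ((norm v)\<^sup>2 / 2) = (cmod (h w))\<^sup>2"
    using assms(3) by (simp add: norm_fock_kernel dot_square_norm power2_eq_square flip: exp_add)
  also have "\<dots> \<le> exp ((norm w)\<^sup>2 / 2) * (fock_norm h)\<^sup>2"
    by (rule fock_point_evaluation[OF assms(1)])
  also have "\<dots> \<le> exp ((norm v)\<^sup>2 / 2) * (fock_norm h)\<^sup>2"
    using assms(2) by (intro mult_right_mono) (simp_all add: power_mono)
  finally have "1 \<le> (fock_norm h)\<^sup>2"
    by simp
  then show ?thesis
    using fock_norm_nonneg[of h] power2_le_imp_le[of 1 "fock_norm h"] by simp
qed

section \<open>Compact composition operators have a fixed point\<close>

lemma holo_map_continuous: "holo_map \<phi> \<Longrightarrow> continuous_on UNIV \<phi>"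
  unfolding holo_map_def
  using continuous_on_vec_lambda[of UNIV "\<lambda>i z. \<phi> z $ i"] entire_Cd_continuous by force

lemma brouwer_escape:
  fixes f :: "'a::euclidean_space \<Rightarrow> 'a"
  assumes "continuous_on UNIV f" "\<And>x. f x \<noteq> x" "0 \<le> r"
  shows "\<exists>w. norm w \<le> r \<and> r < norm (f w)"
proof (rule ccontr)
  assume "\<not> ?thesis"
  then have "f \<in> cball 0 r \<rightarrow> cball 0 r"
    by (auto simp: not_less)
  with assms brouwer[of "cball 0 r" f] show False
    by (auto intro: continuous_on_subset)
qed

text \<open>Without a fixed point, Brouwer gives points \<open>w\<^sub>n\<close> with \<open>|w\<^sub>n| \<le> n < |\<phi> w\<^sub>n|\<close>. The unit kernels
  at \<open>\<phi> w\<^sub>n\<close> tend to \<open>0\<close> pointwise, so any norm limit of a subsequence of their images under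
  \<open>C\<^sub>\<phi>\<close> must be \<open>0\<close>; but evaluating at \<open>w\<^sub>n\<close> shows that these images all have norm at least \<open>1\<close>.\<close>

lemma compact_comp_op_fixed_point:
  fixes \<phi> :: "complex^'d \<Rightarrow> complex^'d"
  assumes cc: "compact_comp_op \<phi>"
  shows "\<exists>z. \<phi> z = z"
proof (rule ccontr)
  assume no_fixed: "\<nexists>z. \<phi> z = z"
  have cop: "comp_op_on_fock \<phi>"
    using cc by (simp add: compact_comp_op_def)
  then have "continuous_on UNIV \<phi>"
    by (simp add: comp_op_on_fock_def holo_map_continuous)
  then have "\<exists>w. norm w \<le> real n \<and> real n < norm (\<phi> w)" for n
    using no_fixed by (intro brouwer_escape) auto
  then obtain w where w: "\<And>n. norm (w n) \<le> real n \<and> real n < norm (\<phi> (w n))"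
    by metis
  define s where "s n = fock_kernel (\<phi> (w n))" for n
  have "\<forall>n. s n \<in> fock_space \<and> fock_norm (s n) \<le> 1"
    by (simp add: s_def fock_kernel_in_fock_space fock_norm_fock_kernel)
  then obtain r g where r: "strict_mono r" and g: "g \<in> fock_space"
    and lim: "(\<lambda>n. fock_norm (\<lambda>z. s (r n) (\<phi> z) - g z)) \<longlonglongrightarrow> 0"
    using cc unfolding compact_comp_op_def by blast
  define D where "D n z = s (r n) (\<phi> z) - g z" for n z
  have D: "D n \<in> fock_space" for n
    using cop g unfolding D_def[abs_def] s_def comp_op_on_fock_def comp_def
    by (intro fock_space_diff) (auto simp: fock_kernel_in_fock_space)
  have "real n \<le> norm (\<phi> (w (r n)))" for n
    using seq_suble[OF r, of n] w[of "r n"] by (simp add: less_imp_le order_trans)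
  then have "filterlim (\<lambda>n. norm (\<phi> (w (r n)))) at_top sequentially"
    by (intro filterlim_at_top_mono[OF filterlim_real_sequentially]) simp
  then have "(\<lambda>n. s (r n) (\<phi> z)) \<longlonglongrightarrow> 0" for z
    unfolding s_def by (rule fock_kernel_tendsto_zero)
  moreover have "(\<lambda>n. D n z) \<longlonglongrightarrow> 0" for z
    using lim by (intro fock_norm_tendsto_zero_imp_pointwise D) (simp add: D_def[abs_def])
  ultimately have "(\<lambda>n. s (r n) (\<phi> z) - D n z) \<longlonglongrightarrow> 0 - 0" for z
    by (intro tendsto_diff)
  then have "g z = 0" for z
    by (simp add: D_def LIMSEQ_const_iff)
  then have "1 \<le> fock_norm (D n)" for n
    using w by (intro one_le_fock_norm_if_kernel_value[OF D, of "w (r n)" "\<phi> (w (r n))"])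
      (auto simp: D_def s_def intro: order_trans[OF _ less_imp_le])
  moreover have "(\<lambda>n. fock_norm (D n)) \<longlonglongrightarrow> 0"
    using lim by (simp add: D_def[abs_def])
  ultimately show False
    using LIMSEQ_le_const[of "\<lambda>n. fock_norm (D n)" 0 1] by auto
qed

text \<open>Every \<open>\<phi>\<^sup>k\<close> fixes \<open>z\<^sub>0\<close>, so each linear combination of the \<open>x \<circ> \<phi>\<^sup>k\<close> vanishes at \<open>z\<^sub>0\<close>, and
  point evaluation at \<open>z\<^sub>0\<close> keeps it at distance at least \<open>exp (-|z\<^sub>0|\<^sup>2/4)\<close> from the constant \<open>1\<close>.\<close>

lemma not_cyclic_vec_if_zero_at_fixed_point:
  fixes \<phi> :: "complex^'d \<Rightarrow> complex^'d"
  assumes cop: "comp_op_on_fock \<phi>" and fixed: "\<phi> z0 = z0" and zero: "x z0 = 0"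
  shows "\<not> cyclic_vec \<phi> x"
proof
  assume "cyclic_vec \<phi> x"
  then have x: "x \<in> fock_space"
    and dense: "\<forall>g\<in>fock_space. \<forall>\<epsilon>>0. \<exists>N c. fock_norm (\<lambda>z. g z - (\<Sum>k\<le>N. c k * x ((\<phi> ^^ k) z))) < \<epsilon>"
    by (simp_all add: cyclic_vec_def)
  from dense[rule_format, OF fock_space_const exp_gt_zero]
  obtain N c where approx: "fock_norm (\<lambda>z. 1 - (\<Sum>k\<le>N. c k * x ((\<phi> ^^ k) z))) < exp (- (norm z0)\<^sup>2 / 4)"
    by blast
  define D where "D z = 1 - (\<Sum>k\<le>N. c k * x ((\<phi> ^^ k) z))" for z
  have "D \<in> fock_space"
    unfolding D_def[abs_def] by (intro fock_space_diff fock_space_const fock_space_sum fock_space_funpow[OF cop x])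
  moreover have "(\<phi> ^^ k) z0 = z0" for k
    using fixed by (induction k) simp_all
  then have "D z0 = 1"
    by (simp add: D_def zero)
  ultimately have "1 \<le> exp ((norm z0)\<^sup>2 / 2) * (fock_norm D)\<^sup>2"
    using fock_point_evaluation[of D z0] by simp
  also have "\<dots> < exp ((norm z0)\<^sup>2 / 2) * (exp (- (norm z0)\<^sup>2 / 4))\<^sup>2"
    using approx fock_norm_nonneg[of D] by (intro mult_strict_left_mono power_strict_mono) (simp_all add: D_def[abs_def])
  also have "\<dots> = 1"
    by (simp add: power2_eq_square flip: exp_add)
  finally show False
    by simp
qed

theorem mainTheorem15:
  fixes \<phi> :: "complex^'d \<Rightarrow> complex^'d"
  assumes "compact_comp_op \<phi>" and "cyclic_op \<phi>"
  shows "\<not> (\<exists>f\<in>fock_space. \<exists>g\<in>fock_space.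
            (\<forall>a b. (\<lambda>z. a * f z + b * g z) = (\<lambda>z. 0) \<longrightarrow> a = 0 \<and> b = 0) \<and>
            (\<forall>a b. (\<lambda>z. a * f z + b * g z) = (\<lambda>z. 0) \<or>
                   cyclic_vec \<phi> (\<lambda>z. a * f z + b * g z)))"
proof clarify
  fix f g :: "complex^'d \<Rightarrow> complex"
  assume indep: "\<forall>a b. (\<lambda>z. a * f z + b * g z) = (\<lambda>z. 0) \<longrightarrow> a = 0 \<and> b = 0"
    and cyclic: "\<forall>a b. (\<lambda>z. a * f z + b * g z) = (\<lambda>z. 0) \<or> cyclic_vec \<phi> (\<lambda>z. a * f z + b * g z)"
  obtain z0 where fixed: "\<phi> z0 = z0"
    using compact_comp_op_fixed_point[OF assms(1)] by blast
  obtain a b where nontrivial: "a \<noteq> 0 \<or> b \<noteq> 0" and zero: "a * f z0 + b * g z0 = 0"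
  proof (cases "f z0 = 0")
    case True
    then show ?thesis using that[of 1 0] by simp
  next
    case False
    then show ?thesis using that[of "g z0" "- f z0"] by (simp add: mult.commute)
  qed
  have "cyclic_vec \<phi> (\<lambda>z. a * f z + b * g z)"
    using indep cyclic nontrivial by blast
  moreover have "comp_op_on_fock \<phi>"
    using assms(1) by (simp add: compact_comp_op_def)
  ultimately show False
    using not_cyclic_vec_if_zero_at_fixed_point[of \<phi> z0 "\<lambda>z. a * f z + b * g z"] fixed zero by simp
qed

end
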